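(* Let $p$ be an odd prime and let $q\in\mathbb{C}_p$ satisfy $|1-q|_p<p^{-1/(p-1)}$. Then for every integer $n\ge 0$, $$\left|\frac{2}{[2]_q}E_{n,q}+\sum_{j=0}^{p-1}(-1)^{j+1}[j]_q^n\right|_p\le 1,$$ i.e. this quantity is a $p$-adic integer.
   Context: $\mathbb{C}_p$ is the completion of an algebraic closure of $\mathbb{Q}_p$, with absolute value $|\cdot|_p$ normalized by $|p|_p=1/p$. For $x\in\mathbb{Z}_p$ put $[x]_q=\frac{1-q^x}{1-q}$ and $[x]_{-q}=\frac{1-(-q)^x}{1+q}$. For a function $f$ on $\mathbb{Z}_p$ the fermionic $p$-adic $q$-integral is $\int_{\mathbb{Z}_p}f(x)\,d\mu_{-q}(x)=\lim_{N\to\infty}\frac{1}{[p^N]_{-q}}\sum_{x=0}^{p^N-1}f(x)(-q)^x$. The $q$-Euler numbers are $E_{n,q}=\int_{\mathbb{Z}_p}[x]_q^n q^{-x}\,d\mu_{-q}(x)$; equivalently $\frac{2}{[2]_q}E_{n,q}=\lim_{N\to\infty}\sum_{x=0}^{p^N-1}(-1)^x[x]_q^n$. *)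

theory Defs
  imports Complex_Main "HOL-Computational_Algebra.Polynomial" "HOL-Computational_Algebra.Primes"
begin

text \<open>A model of C_p: a field K with an absolute value av such that
  av is a non-archimedean absolute value, it restricts to the p-adic absolute
  value on the integers (hence on Q), K is complete with respect to av,
  K is algebraically closed, and the elements algebraic over Q are dense in K.
  These properties characterise the completion of an algebraic closure of Q_p
  up to isometric isomorphism.\<close>

definition is_Cp :: "nat \<Rightarrow> ('a::field \<Rightarrow> real) \<Rightarrow> bool" where
  "is_Cp p av \<longleftrightarrow>
     (\<forall>x. av x \<ge> 0) \<and> (\<forall>x. av x = 0 \<longleftrightarrow> x = 0) \<and>
     (\<forall>x y. av (x * y) = av x * av y) \<and>
     (\<forall>x y. av (x + y) \<le> max (av x) (av y)) \<and>
     (\<forall>m::int. m \<noteq> 0 \<longrightarrow> av (of_int m) = real p powr (- real (multiplicity (int p) m))) \<and>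
     (\<forall>X::nat \<Rightarrow> 'a. (\<forall>e>0. \<exists>N. \<forall>m\<ge>N. \<forall>n\<ge>N. av (X m - X n) < e) \<longrightarrow>
         (\<exists>L. \<forall>e>0. \<exists>N. \<forall>n\<ge>N. av (X n - L) < e)) \<and>
     (\<forall>P::'a poly. degree P > 0 \<longrightarrow> (\<exists>x. poly P x = 0)) \<and>
     (\<forall>x. \<forall>e>0. \<exists>y. (\<exists>P::int poly. P \<noteq> 0 \<and> poly (map_poly of_int P) y = 0) \<and> av (x - y) < e)"

definition av_tendsto :: "('a::field \<Rightarrow> real) \<Rightarrow> (nat \<Rightarrow> 'a) \<Rightarrow> 'a \<Rightarrow> bool" where
  "av_tendsto av X L \<longleftrightarrow> (\<forall>e>0. \<exists>N. \<forall>n\<ge>N. av (X n - L) < e)"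

definition av_lim :: "('a::field \<Rightarrow> real) \<Rightarrow> (nat \<Rightarrow> 'a) \<Rightarrow> 'a" where
  "av_lim av X = (THE L. av_tendsto av X L)"

text \<open>q-numbers for natural arguments: [x]_q = (1 - q^x)/(1 - q), written as the
  polynomial 1 + q + ... + q^(x-1) so that the case q = 1 is covered.\<close>
definition qint :: "'a::field \<Rightarrow> nat \<Rightarrow> 'a" where
  "qint q x = (\<Sum>i<x. q ^ i)"

definition qint_neg :: "'a::field \<Rightarrow> nat \<Rightarrow> 'a" where
  "qint_neg q x = (1 - (- q) ^ x) / (1 + q)"

definition ferm_qint :: "('a::field \<Rightarrow> real) \<Rightarrow> nat \<Rightarrow> 'a \<Rightarrow> (nat \<Rightarrow> 'a) \<Rightarrow> 'a" where
  "ferm_qint av p q f = av_lim av (\<lambda>N. (1 / qint_neg q (p ^ N)) * (\<Sum>x<p ^ N. f x * (- q) ^ x))"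

definition qEuler :: "('a::field \<Rightarrow> real) \<Rightarrow> nat \<Rightarrow> 'a \<Rightarrow> nat \<Rightarrow> 'a" where
  "qEuler av p q n = ferm_qint av p q (\<lambda>x. qint q x ^ n * inverse q ^ x)"

end

theory Submission
  imports Defs
begin

(* Put S_N = sum_{x < p^N} (-1)^x [x]_q^n.  Writing x = y + j p^N with
   y < p^N, j < p, one has [x]_q = [y]_q + q^y [p^N]_q [j]_{q^(p^N)}, and since p is odd
   the j-blocks contribute S_N with alternating signs that add up to S_N once.  Because
   |[p^N]_q| <= c^N for c = max(1/p, |q - 1|^(p-1)) < 1 (the binomial coefficients
   (p choose k), 0 < k < p, are divisible by p), we get |S_(N+1) - S_N| <= c^N, so
   (S_N) is Cauchy and converges to some L with |L| <= 1.  The fermionic Riemann sums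
   defining E_(n,q) equal (1+q)/(1+q^(p^N)) * S_N, hence E_(n,q) = (1+q)/2 * L, i.e.
   2/[2]_q E_(n,q) = L, and the quantity of the theorem is L - S_1, of absolute value <= 1.
   The file first collects algebraic facts on q-numbers, then general facts on
   non-archimedean absolute values and their limits (locale ultrametric_av), then the
   p-adic bound on [p]_r (locale padic_av), then the argument above (locale
   qeuler_setting); the theorem instantiates these locales from is_Cp. *)

section \<open>Algebra of q-numbers\<close>

lemma qint_add: "qint q (a + b) = qint q a + q ^ a * qint q b"
  by (induction b) (auto simp: qint_def algebra_simps power_add)

text \<open>Multiplicativity [m k]_q = [m]_q [k]_(q^m); it drives the block decomposition.\<close>
lemma qint_mult: "qint q (m * k) = qint q m * qint (q ^ m) k"
proof (induction k)
  case 0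
  then show ?case by (simp add: qint_def)
next
  case (Suc k)
  have "qint q (m * Suc k) = qint q (m * k) + q ^ (m * k) * qint q m"
    using qint_add[of q "m * k" m] by (simp add: algebra_simps)
  also have "\<dots> = qint q m * qint (q ^ m) (Suc k)"
    using Suc by (simp add: qint_def algebra_simps flip: power_mult)
  finally show ?case .
qed

lemma qint_sub1: "(q - 1) * qint q m = q ^ m - 1"
  by (induction m) (auto simp: qint_def algebra_simps)

lemma qint_two: "qint q 2 = 1 + q"
  by (simp add: qint_def numeral_2_eq_2)

text \<open>Expansion of [m]_(1+s) in powers of s (hockey-stick identity).\<close>
lemma qint_binomial: "qint (1 + s) m = (\<Sum>k<m. of_nat (m choose (k + 1)) * s ^ k)"
proof (induction m)
  case 0
  then show ?case by (simp add: qint_def)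
next
  case (Suc m)
  have binom: "(1 + s) ^ m = (\<Sum>k<Suc m. of_nat (m choose k) * s ^ k)"
    using binomial_ring[of s 1 m] by (simp add: add.commute lessThan_Suc_atMost)
  have "qint (1 + s) (Suc m) = qint (1 + s) m + (1 + s) ^ m"
    by (simp add: qint_def)
  also have "\<dots> = (\<Sum>k<Suc m. of_nat (m choose (k + 1)) * s ^ k)
                 + (\<Sum>k<Suc m. of_nat (m choose k) * s ^ k)"
    using Suc binom by (simp add: binomial_eq_0)
  also have "\<dots> = (\<Sum>k<Suc m. of_nat (Suc m choose (k + 1)) * s ^ k)"
    by (simp add: sum.distrib[symmetric] algebra_simps)
  finally show ?case .
qed

lemma sum_split_blocks: "(\<Sum>x<k * M. f x) = (\<Sum>j<k. \<Sum>y<M. f (y + j * M))"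
  for f :: "nat \<Rightarrow> 'a::comm_monoid_add"
proof -
  have "(\<Sum>x<k * M. f x) = (\<Sum>j<k. \<Sum>x\<in>{j * M..<j * M + M}. f x)"
    by (rule sum.nat_group[symmetric])
  also have "\<dots> = (\<Sum>j<k. \<Sum>y<M. f (y + j * M))"
    by (simp add: sum.shift_bounds_nat_ivl[of f 0 "j * M" M for j, simplified]
        lessThan_atLeast0 add.commute)
  finally show ?thesis .
qed

lemma sum_alternating_odd: "odd p \<Longrightarrow> (\<Sum>j<p. (- 1 :: 'a::comm_ring_1) ^ j) = 1"
proof -
  assume "odd p"
  then obtain m where "p = 2 * m + 1" by (metis oddE)
  moreover have "(\<Sum>j<2 * m + 1. (- 1 :: 'a) ^ j) = 1"
    by (induction m) (auto simp: algebra_simps)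
  ultimately show ?thesis by simp
qed

lemma power_eventually_less:
  fixes c e :: real
  assumes "0 \<le> c" "c < 1" "e > 0"
  shows "\<exists>N. \<forall>m\<ge>N. c ^ m < e"
proof -
  have "(\<lambda>m. c ^ m) \<longlonglongrightarrow> 0" using assms by (intro LIMSEQ_power_zero) simp
  then have "eventually (\<lambda>m. c ^ m < e) sequentially" using assms(3) by (rule order_tendstoD(2))
  then show ?thesis by (simp add: eventually_sequentially)
qed

section \<open>Non-archimedean absolute values\<close>

definition av_cauchy :: "('a::field \<Rightarrow> real) \<Rightarrow> (nat \<Rightarrow> 'a) \<Rightarrow> bool" where
  "av_cauchy av X \<longleftrightarrow> (\<forall>e>0. \<exists>N. \<forall>m\<ge>N. \<forall>n\<ge>N. av (X m - X n) < e)"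

locale ultrametric_av =
  fixes av :: "'a::field \<Rightarrow> real"
  assumes nonneg: "av x \<ge> 0"
    and zero_iff: "av x = 0 \<longleftrightarrow> x = 0"
    and mult: "av (x * y) = av x * av y"
    and ultra: "av (x + y) \<le> max (av x) (av y)"
begin

lemma av_zero [simp]: "av 0 = 0"
  using zero_iff by simp

lemma av_one [simp]: "av 1 = 1"
proof -
  have "av 1 * av 1 = av 1" using mult[of 1 1] by simp
  moreover have "av 1 \<noteq> 0" using zero_iff by simp
  ultimately show ?thesis by simp
qed

lemma av_minus_one [simp]: "av (- 1) = 1"
proof -
  have "av (- 1) * av (- 1) = 1" using mult[of "- 1" "- 1"] by simp
  then show ?thesis using nonneg[of "- 1"] by (metis abs_of_nonneg abs_square_eq_1 power2_eq_square)
qed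

lemma av_uminus [simp]: "av (- x) = av x"
  using mult[of "- 1" x] by simp

lemma av_diff_commute: "av (x - y) = av (y - x)"
  using av_uminus[of "x - y"] by simp

lemma ultra_diff: "av (x - y) \<le> max (av x) (av y)"
  using ultra[of x "- y"] by simp

lemma ultra_le: "av x \<le> B \<Longrightarrow> av y \<le> B \<Longrightarrow> av (x + y) \<le> B"
  using ultra[of x y] by simp

lemma ultra_diff_less: "av x < B \<Longrightarrow> av y < B \<Longrightarrow> av (x - y) < B"
  using ultra_diff[of x y] by simp

lemma ultra_dominant: "av y < av x \<Longrightarrow> av (x + y) = av x"
proof -
  assume less: "av y < av x"
  have "av x \<le> max (av (x + y)) (av y)" using ultra_diff[of "x + y" y] by simp
  then have "av x \<le> av (x + y)" using less by simp
  with ultra[of x y] less show ?thesis by simp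
qed

lemma av_power: "av (x ^ n) = av x ^ n"
  by (induction n) (simp_all add: mult)

lemma av_inverse: "av (inverse x) = inverse (av x)"
proof (cases "x = 0")
  case False
  then have "av x * av (inverse x) = 1" using mult[of x "inverse x"] by simp
  then show ?thesis by (metis inverse_unique)
qed simp

lemma av_divide: "av (x / y) = av x / av y"
  by (simp add: divide_inverse mult av_inverse)

lemma av_sum_le: "0 \<le> B \<Longrightarrow> (\<And>i. i \<in> A \<Longrightarrow> av (f i) \<le> B) \<Longrightarrow> av (sum f A) \<le> B"
  by (induction A rule: infinite_finite_induct) (simp_all add: ultra_le)

lemma av_mult_le: "av x \<le> 1 \<Longrightarrow> av y \<le> B \<Longrightarrow> av (x * y) \<le> B"
  by (simp add: mult) (metis mult_left_le_one_le mult_mono nonneg order_trans mult_1)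

lemma av_power_le1: "av x \<le> 1 \<Longrightarrow> av (x ^ n) \<le> 1"
  by (simp add: av_power power_le_one nonneg)

lemma av_le1_if_close_to_1: "av (x - 1) \<le> 1 \<Longrightarrow> av x \<le> 1"
  using ultra_le[of 1 1 "x - 1"] by simp

lemma av_qint_le1: "av q \<le> 1 \<Longrightarrow> av (qint q m) \<le> 1"
  unfolding qint_def by (rule av_sum_le) (auto simp: av_power_le1)

text \<open>Since q^m - 1 = (q - 1)[m]_q, the powers of q stay as close to 1 as q is.\<close>
lemma av_power_sub1_le: "av q \<le> 1 \<Longrightarrow> av (q ^ m - 1) \<le> av (q - 1)"
  using qint_sub1[of q m] av_qint_le1[of q m] nonneg by (metis mult mult_left_le)

lemma av_power_diff_le:
  assumes u: "av u \<le> 1" and v: "av v \<le> 1"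
  shows "av ((u + v) ^ k - u ^ k) \<le> av v"
proof -
  have factor: "(u + v) ^ k - u ^ k = v * (\<Sum>i<k. u ^ (k - Suc i) * (u + v) ^ i)"
    using power_diff_sumr2[of "u + v" k u] by simp
  have "av (u + v) \<le> 1" using u v by (rule ultra_le)
  then have "av (\<Sum>i<k. u ^ (k - Suc i) * (u + v) ^ i) \<le> 1"
    by (intro av_sum_le) (auto intro!: av_mult_le av_power_le1 u)
  then show ?thesis unfolding factor using nonneg by (simp add: mult) (metis mult_left_le)
qed

lemma tendsto_unique: "av_tendsto av X L1 \<Longrightarrow> av_tendsto av X L2 \<Longrightarrow> L1 = L2"
proof (rule ccontr)
  assume lim1: "av_tendsto av X L1" and lim2: "av_tendsto av X L2" and ne: "L1 \<noteq> L2"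
  define e where "e = av (L1 - L2)"
  have "e > 0" using ne zero_iff nonneg unfolding e_def by (metis less_eq_real_def right_minus_eq)
  then obtain N1 N2 where N1: "\<And>n. n \<ge> N1 \<Longrightarrow> av (X n - L1) < e"
    and N2: "\<And>n. n \<ge> N2 \<Longrightarrow> av (X n - L2) < e"
    using lim1 lim2 unfolding av_tendsto_def by meson
  have "av ((X (max N1 N2) - L2) - (X (max N1 N2) - L1)) < e"
    by (rule ultra_diff_less) (use N1 N2 in auto)
  then show False unfolding e_def by simp
qed

lemma av_lim_eq: "av_tendsto av X L \<Longrightarrow> av_lim av X = L"
  unfolding av_lim_def using tendsto_unique by blast

lemma tendsto_geometric:
  assumes "0 \<le> c" "c < 1" and bound: "\<And>N. av (X N - a) \<le> c ^ N"
  shows "av_tendsto av X a"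
  unfolding av_tendsto_def
proof (intro allI impI)
  fix e :: real assume "e > 0"
  then obtain N where "\<forall>m\<ge>N. c ^ m < e" using power_eventually_less assms(1,2) by blast
  then show "\<exists>N. \<forall>n\<ge>N. av (X n - a) < e" using bound by (meson order.strict_trans1)
qed

lemma cauchy_if_geometric_steps:
  assumes c: "0 \<le> c" "c < 1" and step: "\<And>N. av (X (Suc N) - X N) \<le> c ^ N"
  shows "av_cauchy av X"
proof -
  have tail: "av (X m - X N) \<le> c ^ N" if "N \<le> m" for m N
    using that
  proof (induction m rule: dec_induct)
    case (step m)
    have "c ^ m \<le> c ^ N" using step(1) c by (simp add: power_decreasing)
    then show ?case
      using ultra_le[of "X (Suc m) - X m" "c ^ N" "X m - X N"] assms(3)[of m] step(3) by simp
  qed (simp add: c)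
  show ?thesis
    unfolding av_cauchy_def
  proof (intro allI impI)
    fix e :: real assume "e > 0"
    then obtain N where N: "\<forall>m\<ge>N. c ^ m < e" using power_eventually_less c by blast
    have "av ((X m - X N) - (X k - X N)) < e" if "m \<ge> N" "k \<ge> N" for m k
      by (rule ultra_diff_less)
        (use tail[OF that(1)] tail[OF that(2)] N in \<open>meson order.refl le_less_trans\<close>)+
    then show "\<exists>N. \<forall>m\<ge>N. \<forall>k\<ge>N. av (X m - X k) < e" by auto
  qed
qed

lemma tendsto_le:
  assumes lim: "av_tendsto av X L" and "0 < B" and bound: "\<And>N. av (X N) \<le> B"
  shows "av L \<le> B"
proof -
  obtain N where "av (X N - L) < B" using lim \<open>0 < B\<close> unfolding av_tendsto_def by blast
  then have "av (X N - (X N - L)) \<le> B" using ultra_diff[of "X N" "X N - L"] bound[of N] by simp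
  then show ?thesis by simp
qed

lemma tendsto_mult:
  assumes limX: "av_tendsto av X a" and limY: "av_tendsto av Y b"
    and X_le: "\<And>N. av (X N) \<le> 1" and b_le: "av b \<le> 1"
  shows "av_tendsto av (\<lambda>N. X N * Y N) (a * b)"
  unfolding av_tendsto_def
proof (intro allI impI)
  fix e :: real assume "e > 0"
  then obtain N1 N2 where N1: "\<forall>n\<ge>N1. av (X n - a) < e" and N2: "\<forall>n\<ge>N2. av (Y n - b) < e"
    using limX limY unfolding av_tendsto_def by meson
  have "av (X n * (Y n - b) - (a - X n) * b) < e" if "n \<ge> max N1 N2" for n
  proof (rule ultra_diff_less)
    show "av (X n * (Y n - b)) < e"
      using N2 that X_le by (simp add: mult) (meson le_less_trans mult_left_le_one_le nonneg)
    show "av ((a - X n) * b) < e"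
      using N1 that b_le av_diff_commute[of a "X n"]
      by (simp add: mult) (meson le_less_trans mult_right_le_one_le nonneg)
  qed
  moreover have "X n * Y n - a * b = X n * (Y n - b) - (a - X n) * b" for n
    by (simp add: algebra_simps)
  ultimately show "\<exists>N. \<forall>n\<ge>N. av (X n * Y n - a * b) < e"
    by (metis max.cobounded1 max.cobounded2 order_trans)
qed

end

section \<open>The p-adic absolute value on the integers\<close>

locale padic_av = ultrametric_av av for av :: "'a::field \<Rightarrow> real" +
  fixes p :: nat
  assumes prime: "prime p"
    and av_of_int: "m \<noteq> 0 \<Longrightarrow> av (of_int m) = real p powr (- real (multiplicity (int p) m))"
begin

lemma p_gt1: "p > 1"
  using prime prime_gt_1_nat by blast

lemma av_of_int_unit: "\<not> int p dvd m \<Longrightarrow> av (of_int m) = 1"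
  using av_of_int[of m] not_dvd_imp_multiplicity_0[of "int p" m] p_gt1 by (cases "m = 0") auto

lemma av_of_nat_dvd: "p dvd m \<Longrightarrow> av (of_nat m) \<le> 1 / real p"
proof (cases "m = 0")
  case False
  assume "p dvd m"
  then have "multiplicity (int p) (int m) \<ge> 1"
    using False p_gt1 by (intro multiplicity_geI) auto
  then have "real p powr (- real (multiplicity (int p) (int m))) \<le> real p powr (- 1)"
    using p_gt1 by (intro powr_mono) auto
  then show ?thesis
    using av_of_int[of "int m"] False p_gt1 by (simp add: powr_minus_divide)
qed simp

text \<open>The key estimate: [p]_r = p (\<dots>) + (r - 1)^(p-1), since p divides (p choose (k+1)) for k < p - 1.\<close>
lemma av_qint_prime_le:
  assumes close: "av (r - 1) \<le> 1"
  shows "av (qint r p) \<le> max (1 / real p) (av (r - 1) ^ (p - 1))"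
proof -
  define s where "s = r - 1"
  have "qint r p = (\<Sum>k<Suc (p - 1). of_nat (p choose (k + 1)) * s ^ k)"
    using qint_binomial[of s p] p_gt1 by (simp add: s_def)
  also have "\<dots> = (\<Sum>k<p - 1. of_nat (p choose (k + 1)) * s ^ k)
                   + of_nat (p choose (p - 1 + 1)) * s ^ (p - 1)"
    by (rule sum.lessThan_Suc)
  also have "\<dots> = (\<Sum>k<p - 1. of_nat (p choose (k + 1)) * s ^ k) + s ^ (p - 1)"
    using p_gt1 by simp
  finally have expand: "qint r p = (\<Sum>k<p - 1. of_nat (p choose (k + 1)) * s ^ k) + s ^ (p - 1)" .
  have "av (\<Sum>k<p - 1. of_nat (p choose (k + 1)) * s ^ k) \<le> 1 / real p"
  proof (rule av_sum_le)
    fix k assume "k \<in> {..<p - 1}"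
    then have "av (of_nat (p choose (k + 1))) \<le> 1 / real p"
      using prime by (intro av_of_nat_dvd dvd_choose_prime) auto
    then show "av (of_nat (p choose (k + 1)) * s ^ k) \<le> 1 / real p"
      using close by (metis s_def mult.commute av_mult_le av_power_le1)
  qed simp
  then show ?thesis
    unfolding expand using ultra_le[of _ "max (1 / real p) (av s ^ (p - 1))"]
    by (simp add: av_power s_def le_max_iff_disj)
qed

end

section \<open>The q-Euler numbers\<close>

locale qeuler_setting = padic_av av p for av :: "'a::field \<Rightarrow> real" and p :: nat +
  fixes q :: 'a
  assumes odd_p: "odd p" and q_close: "av (q - 1) < 1"
begin

text \<open>Contraction ratio: |[p^N]_q| \<le> rate^N.\<close>
definition rate :: real where
  "rate = max (1 / real p) (av (q - 1) ^ (p - 1))"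

definition alt_sum :: "nat \<Rightarrow> nat \<Rightarrow> 'a" where
  "alt_sum n N = (\<Sum>x<p ^ N. (- 1) ^ x * qint q x ^ n)"

lemma rate_nonneg: "0 \<le> rate"
  unfolding rate_def by (simp add: le_max_iff_disj)

lemma rate_lt1: "rate < 1"
  using q_close nonneg[of "q - 1"] p_gt1 unfolding rate_def by (simp add: power_less_one_iff)

lemma av_two: "av 2 = 1"
proof -
  have "\<not> p dvd 2"
  proof
    assume "p dvd 2"
    then have "p \<le> 2" by (simp add: dvd_imp_le)
    with p_gt1 odd_p show False by (cases "p = 2") auto
  qed
  then have "\<not> int p dvd 2" by (metis int_dvd_int_iff of_nat_numeral)
  then show ?thesis using av_of_int_unit[of 2] by simp
qed

lemma av_q_le1: "av q \<le> 1"
  using av_le1_if_close_to_1 q_close by simp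

lemma q_nonzero: "q \<noteq> 0"
  using q_close by auto

lemma av_one_plus: "av (x - 1) < 1 \<Longrightarrow> av (1 + x) = 1"
  using ultra_dominant[of "x - 1" 2] av_two by (simp add: add.commute)

lemma av_one_plus_qpow: "av (1 + q ^ m) = 1"
  using av_power_sub1_le[OF av_q_le1, of m] q_close by (intro av_one_plus) simp

lemma av_qint_prime_power: "av (qint q (p ^ N)) \<le> rate ^ N"
proof (induction N)
  case 0
  then show ?case by (simp add: qint_def)
next
  case (Suc N)
  have close: "av (q ^ p ^ N - 1) \<le> av (q - 1)" by (rule av_power_sub1_le[OF av_q_le1])
  then have "av (qint (q ^ p ^ N) p) \<le> max (1 / real p) (av (q ^ p ^ N - 1) ^ (p - 1))"
    using q_close by (intro av_qint_prime_le) simp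
  also have "\<dots> \<le> rate" unfolding rate_def using close nonneg by (intro max.mono power_mono) auto
  finally have "av (qint (q ^ p ^ N) p) \<le> rate" .
  moreover have "qint q (p ^ Suc N) = qint q (p ^ N) * qint (q ^ p ^ N) p"
    by (simp add: qint_mult[symmetric] mult.commute)
  then have "av (qint q (p ^ Suc N)) = av (qint q (p ^ N)) * av (qint (q ^ p ^ N) p)"
    by (simp only: mult)
  ultimately have "av (qint q (p ^ Suc N)) \<le> rate ^ N * rate"
    using Suc rate_nonneg nonneg by (simp add: mult_mono)
  then show ?case by (simp add: mult.commute)
qed

lemma av_qpow_prime_power_sub1: "av (q ^ p ^ N - 1) \<le> rate ^ N"
  using qint_sub1[of q "p ^ N"] av_qint_prime_power[of N] q_close nonneg
  by (metis mult less_imp_le mult_left_le_one_le order_trans)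

lemma av_qint_shift_le: "av (qint q (y + j * p ^ N) ^ n - qint q y ^ n) \<le> rate ^ N"
proof -
  define v where "v = q ^ y * (qint q (p ^ N) * qint (q ^ p ^ N) j)"
  have shift: "qint q (y + j * p ^ N) = qint q y + v"
    unfolding v_def by (simp add: qint_add qint_mult[symmetric] mult.commute)
  have "av (qint q (p ^ N) * qint (q ^ p ^ N) j) \<le> rate ^ N"
    using av_mult_le[OF av_qint_le1[OF av_power_le1[OF av_q_le1]] av_qint_prime_power[of N]]
    by (simp add: mult.commute)
  then have "av v \<le> rate ^ N"
    unfolding v_def by (rule av_mult_le[OF av_power_le1[OF av_q_le1]])
  moreover have "rate ^ N \<le> 1" using rate_nonneg rate_lt1 by (simp add: power_le_one)
  ultimately show ?thesis
    unfolding shift by (metis av_power_diff_le av_qint_le1 av_q_le1 order_trans)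
qed

lemma alt_sum_le1: "av (alt_sum n N) \<le> 1"
  unfolding alt_sum_def
  by (rule av_sum_le) (auto intro!: av_mult_le av_power_le1 av_qint_le1 av_q_le1 simp: av_power)

text \<open>Splitting [0, p^(N+1)) into p blocks of length p^N; the odd number p of blocks
  with alternating signs reproduces S_N once, up to an error of size rate^N.\<close>
lemma alt_sum_step: "av (alt_sum n (Suc N) - alt_sum n N) \<le> rate ^ N"
proof -
  define M where "M = p ^ N"
  define E where "E j y = (- 1) ^ y * (qint q (y + j * M) ^ n - qint q y ^ n)" for j y
  have E_le: "av (E j y) \<le> rate ^ N" for j y
    unfolding E_def M_def using av_qint_shift_le by (simp add: mult av_power)
  have block: "(- 1) ^ (y + j * M) * qint q (y + j * M) ^ n
      = (- 1) ^ j * ((- 1) ^ y * qint q y ^ n + E j y)" for j y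
  proof -
    have "(- 1 :: 'a) ^ (j * M) = (- 1) ^ j"
      using odd_p by (simp add: M_def power_mult mult.commute[of j])
    then show ?thesis unfolding E_def by (simp add: power_add algebra_simps)
  qed
  have "alt_sum n (Suc N) = (\<Sum>j<p. \<Sum>y<M. (- 1) ^ (y + j * M) * qint q (y + j * M) ^ n)"
    unfolding alt_sum_def M_def by (simp add: sum_split_blocks)
  also have "\<dots> = (\<Sum>j<p. (- 1) ^ j * (alt_sum n N + (\<Sum>y<M. E j y)))"
    unfolding block
    by (intro sum.cong refl) (simp add: alt_sum_def M_def sum.distrib flip: sum_distrib_left)
  also have "\<dots> = (\<Sum>j<p. (- 1) ^ j) * alt_sum n N + (\<Sum>j<p. (- 1) ^ j * (\<Sum>y<M. E j y))"
    by (simp add: sum.distrib distrib_left sum_distrib_right)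
  finally have "alt_sum n (Suc N) - alt_sum n N = (\<Sum>j<p. (- 1) ^ j * (\<Sum>y<M. E j y))"
    by (simp add: sum_alternating_odd[OF odd_p])
  then show ?thesis
    by (simp only:) (auto intro!: av_sum_le av_mult_le E_le simp: av_power rate_nonneg)
qed

lemma alt_sum_cauchy: "av_cauchy av (alt_sum n)"
  using rate_nonneg rate_lt1 alt_sum_step by (rule cauchy_if_geometric_steps)

lemma fermionic_sum_eq:
  "1 / qint_neg q (p ^ N) * (\<Sum>x<p ^ N. qint q x ^ n * inverse q ^ x * (- q) ^ x)
     = (1 + q) / (1 + q ^ p ^ N) * alt_sum n N"
proof -
  have "inverse q ^ x * (- q) ^ x = (- 1) ^ x" for x
    using q_nonzero by (simp add: power_minus[of q] power_inverse field_simps)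
  then have "(\<Sum>x<p ^ N. qint q x ^ n * inverse q ^ x * (- q) ^ x) = alt_sum n N"
    unfolding alt_sum_def by (intro sum.cong refl) (metis mult.assoc mult.commute)
  moreover have "qint_neg q (p ^ N) = (1 + q ^ p ^ N) / (1 + q)"
    unfolding qint_neg_def using odd_p by (simp add: power_minus_odd)
  ultimately show ?thesis by simp
qed

lemma prefactor_tendsto: "av_tendsto av (\<lambda>N. (1 + q) / (1 + q ^ p ^ N)) ((1 + q) / 2)"
proof (rule tendsto_geometric[OF rate_nonneg rate_lt1])
  fix N
  have unit: "av (1 + q ^ p ^ N) = 1" "av (1 + q) = 1"
    using av_one_plus_qpow[of "p ^ N"] av_one_plus_qpow[of 1] by auto
  then have "1 + q ^ p ^ N \<noteq> 0" "(2 :: 'a) \<noteq> 0" using av_two by auto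
  then have diff: "(1 + q) / (1 + q ^ p ^ N) - (1 + q) / 2
      = (1 + q) * (1 - q ^ p ^ N) / (2 * (1 + q ^ p ^ N))"
    by (simp add: field_simps)
  show "av ((1 + q) / (1 + q ^ p ^ N) - (1 + q) / 2) \<le> rate ^ N"
    unfolding diff av_divide mult unit av_two av_diff_commute[of 1]
    using av_qpow_prime_power_sub1[of N] by simp
qed

lemma qEuler_eq_limit:
  assumes lim: "av_tendsto av (alt_sum n) L"
  shows "qEuler av p q n = (1 + q) / 2 * L"
proof -
  have L_le: "av L \<le> 1" using tendsto_le[OF lim] alt_sum_le1 by simp
  have "av ((1 + q) / (1 + q ^ p ^ N)) \<le> 1" for N
    using av_one_plus_qpow[of "p ^ N"] av_one_plus_qpow[of 1] by (simp add: av_divide)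
  then have "av_tendsto av (\<lambda>N. (1 + q) / (1 + q ^ p ^ N) * alt_sum n N) ((1 + q) / 2 * L)"
    using tendsto_mult[OF prefactor_tendsto lim] L_le by blast
  then show ?thesis
    unfolding qEuler_def ferm_qint_def fermionic_sum_eq by (rule av_lim_eq)
qed

theorem qEuler_congruence:
  assumes complete: "\<And>X. av_cauchy av X \<Longrightarrow> \<exists>L. av_tendsto av X L"
  shows "av (2 / qint q 2 * qEuler av p q n + (\<Sum>j<p. (- 1) ^ (j + 1) * qint q j ^ n)) \<le> 1"
proof -
  obtain L where lim: "av_tendsto av (alt_sum n) L" using complete alt_sum_cauchy by blast
  have "1 + q \<noteq> 0" "(2 :: 'a) \<noteq> 0" using av_one_plus_qpow[of 1] av_two by auto
  then have "2 / qint q 2 * qEuler av p q n + (\<Sum>j<p. (- 1) ^ (j + 1) * qint q j ^ n)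
      = L - alt_sum n 1"
    unfolding qEuler_eq_limit[OF lim] qint_two alt_sum_def by (simp add: sum_negf)
  moreover have "av L \<le> 1" using tendsto_le[OF lim] alt_sum_le1 by simp
  ultimately show ?thesis using ultra_diff[of L "alt_sum n 1"] alt_sum_le1[of n 1] by simp
qed

end

theorem corollary2:
  fixes av :: "'a::field \<Rightarrow> real" and p :: nat and q :: 'a and n :: nat
  assumes "prime p" and "odd p" and "is_Cp p av"
    and "av (1 - q) < real p powr (- 1 / (real p - 1))"
  shows "av (2 / qint q 2 * qEuler av p q n
             + (\<Sum>j<p. (- 1) ^ (j + 1) * qint q j ^ n)) \<le> 1"
proof -
  note Cp = assms(3)[unfolded is_Cp_def]
  interpret padic_av av p
    by unfold_locales (use Cp assms(1) in auto)
  have "real p powr (- 1 / (real p - 1)) < 1"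
    using p_gt1 by (intro powr_less_one) auto
  then have "av (q - 1) < 1" using assms(4) av_diff_commute by simp
  then interpret qeuler_setting av p q
    by unfold_locales (use assms(2) in auto)
  show ?thesis
    by (rule qEuler_congruence) (use Cp in \<open>auto simp: av_cauchy_def av_tendsto_def\<close>)
qed

end
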